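(* Let $m\ge n$, $B\in\mathbb R^{n\times m}$ of full row rank, $f,h$ convex and continuously differentiable with Lipschitz gradients, $\mathcal L(u,p)=f(u)-h(p)+(Bu,p)$ with saddle point $(u^*,p^* )$, and $T_{\mathcal U},\mathcal I_{\mathcal V}$ ($m\times m$), $T_{\mathcal P},\mathcal I_{\mathcal Q}$ ($n\times n$) symmetric positive definite. Suppose $h\in\mathcal S^{1,1}_{\mu_{h,T_{\mathcal P}},L_{h,T_{\mathcal P}}}$ w.r.t. $T_{\mathcal P}$ with $L_{h,T_{\mathcal P}}\le1$, $f\in\mathcal S^{1,1}_{\mu_{f,T_{\mathcal U}},L_{f,T_{\mathcal U}}}$ w.r.t. $T_{\mathcal U}$ with $L_{f,T_{\mathcal U}}\le1$, $f_B$ is strongly convex w.r.t. $\mathcal I_{\mathcal V}$ with $\mu_{f_B,\mathcal I_{\mathcal V}}>0$, and $h_B$ is strongly convex w.r.t. $\mathcal I_{\mathcal Q}$ with $\mu_{h_B,\mathcal I_{\mathcal Q}}>0$. Let $(u_k,p_k)$ be generated from $(u_0,p_0)$ by $$u_{k+1/2}=u_k-T_{\mathcal U}^{-1}(\nabla f(u_k)+B^\top p_k),\qquad p_{k+1}=p_k-\alpha_k\mathcal I_{\mathcal Q}^{-1}(\nabla h(p_k)-Bu_{k+1/2}),$$ where $u_{k+1}$ is any point with $\|\nabla\tilde f_B(u_{k+1};u_k,p_{k+1})\|^2_{\mathcal I_{\mathcal V}^{-1}}\le\epsilon_k$ for $k=0,1,2,\dots$, and $\tilde f_B(u;u_k,p_{k+1})=f_B(u)+\frac1{2\alpha_k}\|u-u_k+\alpha_k\mathcal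 I_{\mathcal V}^{-1}B^\top(p_{k+1}-T_{\mathcal P}^{-1}\nabla h(p_{k+1}))\|^2_{\mathcal I_{\mathcal V}}$. Then for $0<\alpha_k<\mu_{h_B,\mathcal I_{\mathcal Q}}/L_{S,\mathcal Q}^2$ and $\mu_k=\min\{\mu_{f_B,\mathcal I_{\mathcal V}}/2,\ \mu_{h_B,\mathcal I_{\mathcal Q}}-\alpha_kL_{S,\mathcal Q}^2\}$, $$\mathcal E(u_{k+1},p_{k+1})\le\frac1{1+\alpha_k\mu_k}\mathcal E(u_k,p_k)+\frac{2\alpha_k}{(1+\alpha_k\mu_k)\mu_{f_B,\mathcal I_{\mathcal V}}}\epsilon_k,$$ where $L_{S,\mathcal Q}^2=L_{h_B,\mathcal I_{\mathcal Q}}^2+L_{e_{\mathcal U},\mathcal I_{\mathcal V}}^2L_S^2$. In particular, for $\alpha_k=\mu_{h_B,\mathcal I_{\mathcal Q}}/(2L_{S,\mathcal Q}^2)$, $$\mathcal E(u_{n+1},p_{n+1})\le\rho^{n+1}\mathcal E(u_0,p_0)+\frac{\mu_{h_B,\mathcal I_{\mathcal Q}}}{\mu_{f_B,\mathcal I_{\mathcal V}}L_{S,\mathcal Q}^2}\sum_{k=0}^n\rho^{n-k+1}\epsilon_k,$$ where $\mu=\min\{\mu_{f_B,\mathcal I_{\mathcal V}},\mu_{h_B,\mathcal I_{\mathcal Q}}\}$ and $\rho=1/(1+\mu_{h_B,\mathcal I_{\mathcal Q}}\mu/(4L_{S,\mathcal Q}^2))\in(0,1)$.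
   Context: A saddle point satisfies $\nabla f(u^* )+B^\top p^*=0$, $Bu^*=\nabla h(p^* )$. For SPD $M$, $\|x\|_M=(Mx,x)^{1/2}$; $D_g(y,x)=g(y)-g(x)-(\nabla g(x),y-x)$; $g\in\mathcal S^{1,1}_{\mu_{g,M},L_{g,M}}$ w.r.t. $M$ means $\frac{\mu_{g,M}}2\|x-y\|_M^2\le D_g(y,x)\le\frac{L_{g,M}}2\|x-y\|_M^2$ for all $x,y$. Define $f_B(u)=f(u)+\frac12(B^\top T_{\mathcal P}^{-1}Bu,u)$, $h_B(p)=h(p)+\frac12(BT_{\mathcal U}^{-1}B^\top p,p)$, $e_{\mathcal U}(u)=u-T_{\mathcal U}^{-1}\nabla f(u)$, $\mathcal E(u,p)=\frac12\|u-u^*\|^2_{\mathcal I_{\mathcal V}}+\frac12\|p-p^*\|^2_{\mathcal I_{\mathcal Q}}$; $L_{h_B,\mathcal I_{\mathcal Q}}$ is the Lipschitz constant of $\nabla h_B$ (dual norm $\|\cdot\|_{\mathcal I_{\mathcal Q}^{-1}}$ vs $\|\cdot\|_{\mathcal I_{\mathcal Q}}$), $L_{e_{\mathcal U},\mathcal I_{\mathcal V}}$ the Lipschitz constant of $e_{\mathcal U}$ in $\|\cdot\|_{\mathcal I_{\mathcal V}}$, $L_S^2=\lambda_{\max}(\mathcal I_{\mathcal Q}^{-1}B\mathcal I_{\mathcal V}^{-1}B^\top)$. *)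

theory Defs
  imports "HOL-Analysis.Analysis"
begin

definition spd :: "real^'n^'n \<Rightarrow> bool" where
  "spd M \<longleftrightarrow> transpose M = M \<and> (\<forall>x. x \<noteq> 0 \<longrightarrow> 0 < x \<bullet> (M *v x))"

definition mnorm :: "real^'n^'n \<Rightarrow> real^'n \<Rightarrow> real" where
  "mnorm M x = sqrt (x \<bullet> (M *v x))"

definition bregman :: "(real^'n \<Rightarrow> real) \<Rightarrow> (real^'n \<Rightarrow> real^'n) \<Rightarrow> real^'n \<Rightarrow> real^'n \<Rightarrow> real" where
  "bregman g dg y x = g y - g x - dg x \<bullet> (y - x)"

definition S11 :: "(real^'n \<Rightarrow> real) \<Rightarrow> (real^'n \<Rightarrow> real^'n) \<Rightarrow> real^'n^'n \<Rightarrow> real \<Rightarrow> real \<Rightarrow> bool" where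
  "S11 g dg M mu L \<longleftrightarrow> (\<forall>x y. mu / 2 * (mnorm M (x - y))^2 \<le> bregman g dg y x
                              \<and> bregman g dg y x \<le> L / 2 * (mnorm M (x - y))^2)"

definition strongly_convex_wrt :: "real^'n^'n \<Rightarrow> real \<Rightarrow> (real^'n \<Rightarrow> real) \<Rightarrow> bool" where
  "strongly_convex_wrt M mu g \<longleftrightarrow> convex_on UNIV (\<lambda>x. g x - mu / 2 * (mnorm M x)^2)"

definition lambda_max :: "real^'n^'n \<Rightarrow> real" where
  "lambda_max A = Sup {lam. \<exists>x. x \<noteq> 0 \<and> A *v x = lam *\<^sub>R x}"

definition fB :: "(real^'m \<Rightarrow> real) \<Rightarrow> real^'m^'n \<Rightarrow> real^'n^'n \<Rightarrow> real^'m \<Rightarrow> real" where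
  "fB f B TP u = f u + 1/2 * (((transpose B ** matrix_inv TP ** B) *v u) \<bullet> u)"

definition hB :: "(real^'n \<Rightarrow> real) \<Rightarrow> real^'m^'n \<Rightarrow> real^'m^'m \<Rightarrow> real^'n \<Rightarrow> real" where
  "hB h B TU p = h p + 1/2 * (((B ** matrix_inv TU ** transpose B) *v p) \<bullet> p)"

definition eU :: "(real^'m \<Rightarrow> real^'m) \<Rightarrow> real^'m^'m \<Rightarrow> real^'m \<Rightarrow> real^'m" where
  "eU gf TU u = u - matrix_inv TU *v gf u"

definition energy :: "real^'m^'m \<Rightarrow> real^'n^'n \<Rightarrow> real^'m \<Rightarrow> real^'n \<Rightarrow> real^'m \<Rightarrow> real^'n \<Rightarrow> real" where
  "energy IV IQ us ps u p = 1/2 * (mnorm IV (u - us))^2 + 1/2 * (mnorm IQ (p - ps))^2"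

definition fBtilde :: "(real^'m \<Rightarrow> real) \<Rightarrow> (real^'n \<Rightarrow> real^'n) \<Rightarrow> real^'m^'n \<Rightarrow> real^'n^'n \<Rightarrow> real^'m^'m
     \<Rightarrow> real \<Rightarrow> real^'m \<Rightarrow> real^'n \<Rightarrow> real^'m \<Rightarrow> real" where
  "fBtilde f gh B TP IV alpha uk pk1 u =
     fB f B TP u + 1 / (2 * alpha) *
       (mnorm IV (u - uk + alpha *\<^sub>R (matrix_inv IV *v (transpose B *v (pk1 - matrix_inv TP *v gh pk1)))))^2"

end

theory Submission
  imports Defs
begin

text \<open>
Write x = u - u* and y = p - p*. The identity |x'|^2 - |x|^2 = 2 (x' - x, x') - |x' - x|^2 in
the I_V- and I_Q-norms, together with the optimality condition of the inexact u-update, the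
p-update and the saddle point equations, expresses twice the energy decrease of one step as
2 alpha_k times a sum of inner products minus the squared step lengths. Strong monotonicity of
grad f_B and grad h_B supplies the dissipation; the two cross terms in B cost half of it, by
cocoercivity of grad f and grad h (a consequence of L <= 1 in S^{1,1}); the Lipschitz terms of
grad h_B and e_U are traded against the squared step lengths, using that L_S^2, the largest
eigenvalue of I_Q^{-1} B I_V^{-1} B^T, bounds |B^T y| in the I_V^{-1}-norm by L_S |y| in the
I_Q-norm; and the residual of the u-update produces the eps_k term. For
alpha_k = mu_{h_B} / (2 L_{S,Q}^2) the contraction factor is the constant rho, and unrolling
the recursion gives the second estimate.
\<close>

(* keep "transpose B *v y" instead of the default simp normal form "y v* B" *)
declare transpose_matrix_vector [simp del]

section \<open>Quadratic forms\<close>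

lemma mult_le_weighted_sum_squares:
  fixes x y t :: real
  assumes "0 < t"
  shows "x * y \<le> t / 2 * x^2 + y^2 / (2 * t)"
proof -
  have "0 \<le> (t * x - y)^2 / (2 * t)" using assms by simp
  also have "\<dots> = t / 2 * x^2 + y^2 / (2 * t) - x * y"
    using assms by (simp add: field_simps power2_eq_square)
  finally show ?thesis by simp
qed

lemma quadratic_nonneg_imp_discriminant:
  fixes a b c :: real
  assumes a: "0 \<le> a" and nonneg: "\<And>t. 0 \<le> c + 2 * b * t + a * t^2"
  shows "b^2 \<le> a * c"
proof (cases "a = 0")
  case True
  have "b = 0"
  proof (rule ccontr)
    assume "b \<noteq> 0"
    then have "c + 2 * b * (- (c + 1) / (2 * b)) + a * (- (c + 1) / (2 * b))^2 = -1"
      using True by (simp add: field_simps)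
    with nonneg show False by (metis neg_0_le_iff_le not_one_le_zero)
  qed
  with True show ?thesis by simp
next
  case False
  with a have "0 < a" by simp
  have "0 \<le> c + 2 * b * (- b / a) + a * (- b / a)^2" by (rule nonneg)
  also have "\<dots> = c - b^2 / a" using \<open>0 < a\<close> by (simp add: field_simps power2_eq_square)
  finally show ?thesis using \<open>0 < a\<close> by (simp add: field_simps)
qed

lemma inner_matrix_vector_transpose: "((A::real^'n^'m) *v x) \<bullet> y = x \<bullet> (transpose A *v y)"
  by (metis dot_lmul_matrix vector_transpose_matrix)

lemma inner_matrix_vector_symmetric:
  "transpose (A::real^'n^'n) = A \<Longrightarrow> (A *v x) \<bullet> y = x \<bullet> (A *v y)"
  using inner_matrix_vector_transpose[of A x y] by simp

lemma matrix_vector_mult_uminus: "(A::real^'n^'m) *v (- x) = - (A *v x)"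
  by (metis diff_0 matrix_vector_mult_0_right matrix_vector_mult_diff_distrib)

lemma transpose_diff: "transpose (A - B) = transpose A - transpose (B::'a::ab_group_add^'n^'m)"
  unfolding transpose_def by (simp add: vec_eq_iff)

lemma quadratic_form_add_scaleR:
  assumes "transpose (A::real^'n^'n) = A"
  shows "(a + t *\<^sub>R b) \<bullet> (A *v (a + t *\<^sub>R b))
           = a \<bullet> (A *v a) + 2 * t * ((A *v a) \<bullet> b) + t^2 * (b \<bullet> (A *v b))"
  using inner_matrix_vector_symmetric[OF assms, of b a]
  by (simp add: power2_eq_square inner_commute algebra_simps)

lemma quadratic_form_diff:
  assumes "transpose (A::real^'n^'n) = A"
  shows "a \<bullet> (A *v a) - b \<bullet> (A *v b) = 2 * ((a - b) \<bullet> (A *v a)) - (a - b) \<bullet> (A *v (a - b))"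
  using inner_matrix_vector_symmetric[OF assms, of b a]
  by (simp add: inner_commute algebra_simps)

lemma has_derivative_quadratic_form:
  assumes "transpose (M::real^'n^'n) = M"
  shows "((\<lambda>x. x \<bullet> (M *v x)) has_derivative (\<lambda>v. (2 *\<^sub>R (M *v x)) \<bullet> v)) (at x)"
proof -
  have lin: "((\<lambda>v. M *v v) has_derivative (\<lambda>v. M *v v)) (at x)"
    by (rule bounded_linear_imp_has_derivative[OF matrix_vector_mul_bounded_linear])
  have "x \<bullet> (M *v v) = v \<bullet> (M *v x)" for v
    by (metis inner_commute inner_matrix_vector_symmetric[OF assms])
  with has_derivative_inner[OF has_derivative_ident lin] show ?thesis
    by (simp add: fun_eq_iff inner_commute)
qed

lemma has_derivative_inner_unique:
  fixes a b :: "'a::euclidean_space"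
  assumes "(\<phi> has_derivative (\<lambda>v. a \<bullet> v)) (at x)" and "(\<phi> has_derivative (\<lambda>v. b \<bullet> v)) (at x)"
  shows "a = b"
proof -
  have "(\<lambda>v. a \<bullet> v) = (\<lambda>v. b \<bullet> v)" by (rule has_derivative_unique[OF assms])
  then have "(a - b) \<bullet> (a - b) = 0" by (metis inner_diff_left right_minus_eq)
  then show ?thesis by simp
qed

section \<open>Symmetric positive definite matrices\<close>

lemma spd_symmetric: "spd M \<Longrightarrow> transpose M = M"
  unfolding spd_def by blast

lemma spd_quadratic_nonneg: "spd M \<Longrightarrow> 0 \<le> x \<bullet> (M *v x)"
  unfolding spd_def by (cases "x = 0") (auto intro: less_imp_le)

lemma spd_invertible:
  assumes "spd (M::real^'n^'n)"
  shows "invertible M"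
proof -
  have "M *v x = 0 \<Longrightarrow> x = 0" for x
    using assms unfolding spd_def by (metis inner_zero_right less_irrefl)
  then obtain M' where "M' ** M = mat 1" using matrix_left_invertible_ker by blast
  then show ?thesis using invertible_left_inverse by blast
qed

lemma matrix_inv_right:
  assumes "invertible (M::real^'n^'n)"
  shows "M ** matrix_inv M = mat 1" and "M *v (matrix_inv M *v x) = x"
proof -
  show *: "M ** matrix_inv M = mat 1"
    using someI_ex[OF assms[unfolded invertible_def]] unfolding matrix_inv_def by blast
  show "M *v (matrix_inv M *v x) = x" by (simp add: matrix_vector_mul_assoc *)
qed

lemma matrix_inv_left:
  assumes "invertible (M::real^'n^'n)"
  shows "matrix_inv M ** M = mat 1" and "matrix_inv M *v (M *v x) = x"
proof -
  show *: "matrix_inv M ** M = mat 1"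
    using matrix_inv_right(1)[OF assms] matrix_left_right_inverse by blast
  show "matrix_inv M *v (M *v x) = x" by (simp add: matrix_vector_mul_assoc *)
qed

lemma matrix_inv_symmetric:
  assumes "invertible (M::real^'n^'n)" and "transpose M = M"
  shows "transpose (matrix_inv M) = matrix_inv M"
proof -
  have "transpose (matrix_inv M) = transpose (matrix_inv M) ** (M ** matrix_inv M)"
    by (simp add: matrix_inv_right[OF assms(1)])
  also have "\<dots> = transpose (M ** matrix_inv M) ** matrix_inv M"
    by (simp add: matrix_transpose_mul matrix_mul_assoc assms(2))
  finally show ?thesis by (simp add: matrix_inv_right[OF assms(1)])
qed

lemma spd_matrix_inv:
  fixes M :: "real^'n^'n"
  assumes "spd M"
  shows "spd (matrix_inv M)"
  unfolding spd_def
proof (intro conjI allI impI)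
  have inv: "invertible M" using spd_invertible[OF assms] .
  show "transpose (matrix_inv M) = matrix_inv M"
    by (rule matrix_inv_symmetric[OF inv spd_symmetric[OF assms]])
  fix x :: "real^'n" assume "x \<noteq> 0"
  then have "matrix_inv M *v x \<noteq> 0" by (metis inv matrix_inv_right(2) matrix_vector_mult_0_right)
  then have "0 < (matrix_inv M *v x) \<bullet> (M *v (matrix_inv M *v x))"
    using assms unfolding spd_def by blast
  then show "0 < x \<bullet> (matrix_inv M *v x)"
    by (simp add: matrix_inv_right[OF inv] inner_commute)
qed

lemma mnorm_power2: "spd M \<Longrightarrow> (mnorm M x)^2 = x \<bullet> (M *v x)"
  unfolding mnorm_def by (simp add: spd_quadratic_nonneg)

lemma mnorm_nonneg: "spd M \<Longrightarrow> 0 \<le> mnorm M x"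
  unfolding mnorm_def by (simp add: spd_quadratic_nonneg)

lemma mnorm_uminus: "mnorm M (- x) = mnorm M x"
  unfolding mnorm_def by (simp add: matrix_vector_mult_uminus)

lemma mnorm_minus_commute: "mnorm M (x - y) = mnorm M (y - x)"
  by (metis mnorm_uminus minus_diff_eq)

lemma mnorm_apply_matrix_inv:
  assumes "spd M"
  shows "mnorm M (matrix_inv M *v x) = mnorm (matrix_inv M) x"
  unfolding mnorm_def using spd_invertible[OF assms] by (simp add: matrix_inv_right inner_commute)

lemma psd_Cauchy_Schwarz:
  fixes S :: "real^'n^'n"
  assumes sym: "transpose S = S" and psd: "\<And>x. 0 \<le> x \<bullet> (S *v x)"
  shows "\<bar>x \<bullet> (S *v y)\<bar> \<le> sqrt (x \<bullet> (S *v x)) * sqrt (y \<bullet> (S *v y))"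
proof -
  have "0 \<le> x \<bullet> (S *v x) + 2 * ((S *v x) \<bullet> y) * t + (y \<bullet> (S *v y)) * t^2" for t
    using psd[of "x + t *\<^sub>R y"] unfolding quadratic_form_add_scaleR[OF sym] by (simp add: algebra_simps)
  then have "((S *v x) \<bullet> y)^2 \<le> (y \<bullet> (S *v y)) * (x \<bullet> (S *v x))"
    by (rule quadratic_nonneg_imp_discriminant[OF psd])
  then have "(x \<bullet> (S *v y))^2 \<le> (x \<bullet> (S *v x)) * (y \<bullet> (S *v y))"
    by (metis inner_matrix_vector_symmetric[OF sym] mult.commute)
  then show ?thesis by (metis real_sqrt_abs real_sqrt_le_mono real_sqrt_mult)
qed

lemma spd_Cauchy_Schwarz:
  assumes "spd M"
  shows "\<bar>a \<bullet> (M *v b)\<bar> \<le> mnorm M a * mnorm M b"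
  unfolding mnorm_def
  by (rule psd_Cauchy_Schwarz[OF spd_symmetric spd_quadratic_nonneg, OF assms assms])

lemma spd_dual_Cauchy_Schwarz:
  assumes "spd M"
  shows "\<bar>a \<bullet> b\<bar> \<le> mnorm (matrix_inv M) a * mnorm M b"
proof -
  have inv: "invertible M" using spd_invertible[OF assms] .
  define z where "z = matrix_inv M *v a"
  have "a = M *v z" unfolding z_def by (simp add: matrix_inv_right[OF inv])
  then have "\<bar>a \<bullet> b\<bar> \<le> mnorm M z * mnorm M b"
    using spd_Cauchy_Schwarz[OF assms, of z b]
    by (simp add: inner_matrix_vector_symmetric[OF spd_symmetric[OF assms]])
  then show ?thesis unfolding z_def mnorm_apply_matrix_inv[OF assms] .
qed

lemma inner_le_Young_dual_norm:
  assumes M: "spd M" and g: "(mnorm (matrix_inv M) g)^2 \<le> e" and t: "0 < t"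
  shows "g \<bullet> x \<le> e / (2 * t) + t / 2 * (mnorm M x)^2"
proof -
  have "g \<bullet> x \<le> mnorm M x * mnorm (matrix_inv M) g"
    using spd_dual_Cauchy_Schwarz[OF M, of g x] by (simp add: mult.commute)
  also have "\<dots> \<le> t / 2 * (mnorm M x)^2 + (mnorm (matrix_inv M) g)^2 / (2 * t)"
    by (rule mult_le_weighted_sum_squares[OF t])
  also have "\<dots> \<le> t / 2 * (mnorm M x)^2 + e / (2 * t)"
    using g t by (simp add: divide_right_mono)
  finally show ?thesis by simp
qed

section \<open>Generalized Rayleigh quotients\<close>

lemma psd_form_zero_imp_kernel:
  fixes S :: "real^'n^'n"
  assumes sym: "transpose S = S" and psd: "\<And>x. 0 \<le> x \<bullet> (S *v x)" and zero: "q \<bullet> (S *v q) = 0"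
  shows "S *v q = 0"
proof -
  have "\<bar>(S *v q) \<bullet> (S *v q)\<bar> \<le> sqrt ((S *v q) \<bullet> (S *v (S *v q))) * sqrt (q \<bullet> (S *v q))"
    by (rule psd_Cauchy_Schwarz[OF sym psd])
  then have "(S *v q) \<bullet> (S *v q) \<le> 0" using zero by simp
  then show ?thesis by (metis inner_gt_zero_iff not_less)
qed

lemma Rayleigh_maximizer_eigenvector:
  fixes K Q :: "real^'n^'n"
  assumes K: "transpose K = K" and Q: "transpose Q = Q"
    and bound: "\<And>x. x \<bullet> (K *v x) \<le> lam * (x \<bullet> (Q *v x))"
    and attained: "q \<bullet> (K *v q) = lam * (q \<bullet> (Q *v q))"
  shows "K *v q = lam *\<^sub>R (Q *v q)"
proof -
  define S where "S = lam *\<^sub>R Q - K"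
  have S_mv: "S *v x = lam *\<^sub>R (Q *v x) - K *v x" for x
    by (simp add: S_def matrix_vector_mult_diff_rdistrib scaleR_matrix_vector_assoc)
  have "S *v q = 0"
  proof (rule psd_form_zero_imp_kernel)
    show "transpose S = S" by (simp add: S_def transpose_diff transpose_scalar K Q)
    show "0 \<le> x \<bullet> (S *v x)" for x using bound[of x] by (simp add: S_mv inner_diff_right)
    show "q \<bullet> (S *v q) = 0" using attained by (simp add: S_mv inner_diff_right)
  qed
  then show ?thesis by (simp add: S_mv)
qed

lemma Rayleigh_quotient_attains_max:
  fixes K Q :: "real^'n^'n"
  assumes Q: "spd Q"
  obtains q lam where "q \<noteq> 0" and "q \<bullet> (K *v q) = lam * (q \<bullet> (Q *v q))"
    and "\<And>x. x \<bullet> (K *v x) \<le> lam * (x \<bullet> (Q *v x))"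
proof -
  define R where "R x = (x \<bullet> (K *v x)) / (x \<bullet> (Q *v x))" for x
  have Q_pos: "x \<noteq> 0 \<Longrightarrow> 0 < x \<bullet> (Q *v x)" for x using Q unfolding spd_def by blast
  have "continuous_on (sphere 0 1) R"
    unfolding R_def using Q_pos
    by (intro continuous_intros linear_continuous_on matrix_vector_mul_bounded_linear)
      (metis Q_pos less_irrefl mem_sphere_0 norm_zero zero_neq_one)
  moreover obtain e :: "real^'n" where "norm e = 1" using vector_choose_size[of 1] by auto
  then have "sphere (0::real^'n) 1 \<noteq> {}" by auto
  ultimately obtain q where q: "q \<in> sphere 0 1" and max: "\<And>y. y \<in> sphere 0 1 \<Longrightarrow> R y \<le> R q"
    using continuous_attains_sup[OF compact_sphere] by metis
  have "q \<noteq> 0" using q by auto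
  have "x \<bullet> (K *v x) \<le> R q * (x \<bullet> (Q *v x))" for x
  proof (cases "x = 0")
    case False
    have "R x = R (x /\<^sub>R norm x)"
      using False by (simp add: R_def matrix_vector_mult_scaleR power2_eq_square)
    also have "\<dots> \<le> R q" using False by (intro max) simp
    finally show ?thesis using Q_pos[OF False] by (simp add: R_def divide_le_eq)
  qed simp
  moreover have "q \<bullet> (K *v q) = R q * (q \<bullet> (Q *v q))"
    using Q_pos[OF \<open>q \<noteq> 0\<close>] by (simp add: R_def)
  ultimately show thesis using \<open>q \<noteq> 0\<close> that by blast
qed

lemma lambda_max_Rayleigh:
  fixes K Q :: "real^'n^'n"
  assumes K: "transpose K = K" and Q: "spd Q"
  obtains q where "q \<noteq> 0"
    and "q \<bullet> (K *v q) = lambda_max (matrix_inv Q ** K) * (q \<bullet> (Q *v q))"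
    and "\<And>x. x \<bullet> (K *v x) \<le> lambda_max (matrix_inv Q ** K) * (x \<bullet> (Q *v x))"
proof -
  obtain q lam where q: "q \<noteq> 0" and attained: "q \<bullet> (K *v q) = lam * (q \<bullet> (Q *v q))"
    and bound: "\<And>x. x \<bullet> (K *v x) \<le> lam * (x \<bullet> (Q *v x))"
    using Rayleigh_quotient_attains_max[OF Q] by metis
  have inv: "invertible Q" using spd_invertible[OF Q] .
  have eigen_iff: "(matrix_inv Q ** K) *v x = l *\<^sub>R x \<longleftrightarrow> K *v x = l *\<^sub>R (Q *v x)" for x l
    by (metis inv matrix_inv_left(2) matrix_inv_right(2) matrix_vector_mul_assoc matrix_vector_mult_scaleR)
  have "lambda_max (matrix_inv Q ** K) = lam"
    unfolding lambda_max_def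
  proof (rule cSup_eq_maximum)
    show "lam \<in> {l. \<exists>x. x \<noteq> 0 \<and> (matrix_inv Q ** K) *v x = l *\<^sub>R x}"
      using q Rayleigh_maximizer_eigenvector[OF K spd_symmetric[OF Q] bound attained] eigen_iff
      by blast
  next
    fix l assume "l \<in> {l. \<exists>x. x \<noteq> 0 \<and> (matrix_inv Q ** K) *v x = l *\<^sub>R x}"
    then obtain x where "x \<noteq> 0" and "K *v x = l *\<^sub>R (Q *v x)" using eigen_iff by blast
    then have "l * (x \<bullet> (Q *v x)) \<le> lam * (x \<bullet> (Q *v x))" using bound[of x] by simp
    moreover have "0 < x \<bullet> (Q *v x)" using Q \<open>x \<noteq> 0\<close> unfolding spd_def by blast
    ultimately show "l \<le> lam" by simp
  qed
  then show thesis using that q attained bound by simp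
qed

section \<open>Gradients of convex functions\<close>

lemma convex_on_along_line:
  assumes "convex_on UNIV \<phi>"
  shows "convex_on UNIV (\<lambda>t::real. \<phi> (x + t *\<^sub>R d))"
proof (rule convex_onI)
  fix s a b :: real
  assume "0 < s" "s < 1"
  have "x + ((1 - s) *\<^sub>R a + s *\<^sub>R b) *\<^sub>R d = (1 - s) *\<^sub>R (x + a *\<^sub>R d) + s *\<^sub>R (x + b *\<^sub>R d)"
    by (simp add: algebra_simps)
  then show "\<phi> (x + ((1 - s) *\<^sub>R a + s *\<^sub>R b) *\<^sub>R d) \<le> (1 - s) * \<phi> (x + a *\<^sub>R d) + s * \<phi> (x + b *\<^sub>R d)"
    using convex_onD[OF assms, of s] \<open>0 < s\<close> \<open>s < 1\<close> by simp
qed simp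

lemma convex_on_gradient_inequality:
  fixes \<phi> :: "'a::real_normed_vector \<Rightarrow> real"
  assumes cvx: "convex_on UNIV \<phi>" and der: "(\<phi> has_derivative D) (at x)"
  shows "\<phi> x + D (y - x) \<le> \<phi> y"
proof -
  define g where "g = (\<lambda>t::real. \<phi> (x + t *\<^sub>R (y - x)))"
  have "((\<lambda>t. x + t *\<^sub>R (y - x)) has_derivative (\<lambda>t. t *\<^sub>R (y - x))) (at 0)"
    by (auto intro!: derivative_eq_intros)
  moreover have "(\<phi> has_derivative D) (at (x + 0 *\<^sub>R (y - x)))"
    using der by simp
  ultimately have "(g has_derivative (\<lambda>t. D (t *\<^sub>R (y - x)))) (at 0)"
    unfolding g_def by (rule has_derivative_compose)
  moreover have "(\<lambda>t. D (t *\<^sub>R (y - x))) = (\<lambda>t. D (y - x) * t)"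
    using has_derivative_linear[OF der] by (simp add: linear_scale mult.commute)
  ultimately have "(g has_field_derivative D (y - x)) (at 0)"
    by (simp add: has_field_derivative_def)
  then have "D (y - x) * (1 - 0) \<le> g 1 - g 0"
    unfolding g_def by (intro convex_on_imp_above_tangent[of UNIV] convex_on_along_line[OF cvx]) auto
  then show ?thesis by (simp add: g_def)
qed

lemma convex_on_gradient_monotone:
  fixes \<phi> :: "'a::real_inner \<Rightarrow> real"
  assumes cvx: "convex_on UNIV \<phi>" and der: "\<And>x. (\<phi> has_derivative (\<lambda>v. G x \<bullet> v)) (at x)"
  shows "0 \<le> (G y - G x) \<bullet> (y - x)"
  using convex_on_gradient_inequality[OF cvx der, of x y] convex_on_gradient_inequality[OF cvx der, of y x]
  by (simp add: inner_diff_left inner_diff_right)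

lemma strongly_convex_gradient_monotone:
  fixes g :: "real^'n \<Rightarrow> real"
  assumes M: "spd M" and sc: "strongly_convex_wrt M mu g"
    and der: "\<And>x. (g has_derivative (\<lambda>v. G x \<bullet> v)) (at x)"
  shows "mu * (mnorm M (y - x))^2 \<le> (G y - G x) \<bullet> (y - x)"
proof -
  let ?\<psi> = "\<lambda>x. g x - mu / 2 * (x \<bullet> (M *v x))"
  have "convex_on UNIV ?\<psi>"
    using sc by (simp add: strongly_convex_wrt_def mnorm_power2[OF M])
  moreover have "(?\<psi> has_derivative (\<lambda>v. (G x - mu *\<^sub>R (M *v x)) \<bullet> v)) (at x)" for x
  proof -
    have "(?\<psi> has_derivative (\<lambda>v. G x \<bullet> v - mu / 2 * ((2 *\<^sub>R (M *v x)) \<bullet> v))) (at x)"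
      by (intro has_derivative_diff der has_derivative_mult_right
          has_derivative_quadratic_form spd_symmetric[OF M])
    then show ?thesis by (simp add: inner_diff_left)
  qed
  ultimately have "0 \<le> ((G y - mu *\<^sub>R (M *v y)) - (G x - mu *\<^sub>R (M *v x))) \<bullet> (y - x)"
    by (rule convex_on_gradient_monotone)
  moreover have "(G y - mu *\<^sub>R (M *v y)) - (G x - mu *\<^sub>R (M *v x))
      = (G y - G x) - mu *\<^sub>R (M *v (y - x))"
    by (simp add: algebra_simps)
  ultimately have "0 \<le> ((G y - G x) - mu *\<^sub>R (M *v (y - x))) \<bullet> (y - x)"
    by simp
  also have "\<dots> = (G y - G x) \<bullet> (y - x) - mu * (mnorm M (y - x))^2"
    by (simp only: inner_diff_left inner_scaleR_left mnorm_power2[OF M]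
        inner_commute[of "M *v (y - x)" "y - x"])
  finally show ?thesis by simp
qed

lemma strongly_convex_modulus_le_Lipschitz:
  fixes g :: "real^'n \<Rightarrow> real"
  assumes M: "spd M" and sc: "strongly_convex_wrt M mu g"
    and der: "\<And>x. (g has_derivative (\<lambda>v. G x \<bullet> v)) (at x)"
    and Lip: "\<And>x y. mnorm (matrix_inv M) (G x - G y) \<le> L * mnorm M (x - y)"
  shows "mu \<le> L"
proof -
  obtain e :: "real^'n" where "norm e = 1" using vector_choose_size[of 1] by auto
  then have "0 < mnorm M e"
    using M unfolding spd_def mnorm_def by (metis norm_zero real_sqrt_gt_0_iff zero_neq_one)
  have "mu * (mnorm M e)^2 \<le> (G e - G 0) \<bullet> (e - 0)"
    using strongly_convex_gradient_monotone[OF M sc der, of e 0] by simp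
  also have "\<dots> \<le> mnorm (matrix_inv M) (G e - G 0) * mnorm M e"
    using spd_dual_Cauchy_Schwarz[OF M, of "G e - G 0" "e - 0"] by simp
  also have "\<dots> \<le> L * mnorm M e * mnorm M e"
    using Lip[of e 0] \<open>0 < mnorm M e\<close> by (simp add: mult_right_mono)
  finally show ?thesis using \<open>0 < mnorm M e\<close> by (simp add: power2_eq_square)
qed

lemma S11_bregman_ge_gradient_gap:
  fixes h :: "real^'n \<Rightarrow> real"
  assumes M: "spd M" and cvx: "convex_on UNIV h"
    and der: "\<And>x. (h has_derivative (\<lambda>v. G x \<bullet> v)) (at x)"
    and S: "S11 h G M mu L" and L: "L \<le> 1"
  shows "1/2 * (mnorm (matrix_inv M) (G y - G x))^2 \<le> bregman h G y x"
proof -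
  define w where "w = G y - G x"
  \<comment> \<open>Evaluate the upper quadratic bound of S11 at the preconditioned gradient step from y.\<close>
  define z where "z = y - matrix_inv M *v w"
  have "(mnorm M (y - z))^2 = (mnorm (matrix_inv M) w)^2"
    by (simp add: z_def mnorm_apply_matrix_inv[OF M])
  moreover have "bregman h G z y \<le> L / 2 * (mnorm M (y - z))^2"
    using S unfolding S11_def by blast
  moreover have "L / 2 * (mnorm M (y - z))^2 \<le> 1/2 * (mnorm M (y - z))^2"
    using L by (intro mult_right_mono) auto
  moreover have "h x + G x \<bullet> (z - x) \<le> h z"
    by (rule convex_on_gradient_inequality[OF cvx der])
  moreover have "G y \<bullet> (z - y) - G x \<bullet> (z - x) + G x \<bullet> (y - x) = - ((mnorm (matrix_inv M) w)^2)"
    unfolding mnorm_power2[OF spd_matrix_inv[OF M]] by (simp add: z_def w_def inner_diff_left inner_diff_right)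
  ultimately show ?thesis
    unfolding bregman_def w_def by linarith
qed

lemma S11_gradient_cocoercive:
  fixes h :: "real^'n \<Rightarrow> real"
  assumes M: "spd M" and cvx: "convex_on UNIV h"
    and der: "\<And>x. (h has_derivative (\<lambda>v. G x \<bullet> v)) (at x)"
    and S: "S11 h G M mu L" and L: "L \<le> 1"
  shows "(mnorm (matrix_inv M) (G y - G x))^2 \<le> (G y - G x) \<bullet> (y - x)"
proof -
  have "bregman h G y x + bregman h G x y = (G y - G x) \<bullet> (y - x)"
    unfolding bregman_def by (simp add: inner_diff_left inner_diff_right)
  then show ?thesis
    using S11_bregman_ge_gradient_gap[OF assms, of y x] S11_bregman_ge_gradient_gap[OF assms, of x y]
    unfolding mnorm_minus_commute[of "matrix_inv M" "G x" "G y"] by linarith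
qed

section \<open>One step of the preconditioned primal-dual iteration\<close>

lemma energy_contraction_arith:
  fixes a mf mh L e X Y D E0 E1 \<Phi> :: real
  assumes a: "0 < a" and mf: "0 < mf" and aL: "a * L < mh"
    and identity: "2 * (E1 - E0) = 2 * a * \<Phi> - D" and E1: "E1 = (X^2 + Y^2) / 2"
    and gap: "\<Phi> \<le> 2 * e / mf + mf / 8 * X^2 - mf * X^2 / 2 - mh * Y^2 / 2
                 + a / 2 * L * Y^2 + D / (2 * a)"
  shows "E1 \<le> 1 / (1 + a * min (mf / 2) (mh - a * L)) * E0
              + 2 * a / ((1 + a * min (mf / 2) (mh - a * L)) * mf) * e"
proof -
  define mk where "mk = min (mf / 2) (mh - a * L)"
  have "0 < mk" using mf aL by (simp add: mk_def)
  have "mk \<le> 3 / 4 * mf" and "mk \<le> mh - a * L"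
    using mf by (auto simp: mk_def min_def)
  then have "mk * X^2 \<le> 3 / 4 * mf * X^2" and "mk * Y^2 \<le> (mh - a * L) * Y^2"
    by (meson mult_right_mono zero_le_power2)+
  then have "a * (mk * X^2 + mk * Y^2) \<le> a * (3 / 4 * mf * X^2 + (mh - a * L) * Y^2)"
    using a by (intro mult_left_mono) auto
  have "2 * (E1 - E0) = 2 * a * \<Phi> - D" by (rule identity)
  also have "\<dots> \<le> 2 * a * (2 * e / mf + mf / 8 * X^2 - mf * X^2 / 2 - mh * Y^2 / 2
      + a / 2 * L * Y^2 + D / (2 * a)) - D"
    using gap a by simp
  also have "\<dots> = 4 * a * e / mf - a * (3 / 4 * mf * X^2 + (mh - a * L) * Y^2)"
    using a mf by (simp add: field_simps)
  also have "\<dots> \<le> 4 * a * e / mf - a * (mk * X^2 + mk * Y^2)"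
    by (rule diff_left_mono) fact
  also have "\<dots> = 2 * (2 * a * e / mf) - 2 * (a * mk * E1)"
    by (simp add: E1 algebra_simps)
  finally have "E1 - E0 \<le> 2 * a * e / mf - a * mk * E1" by argo
  then have "(1 + a * mk) * E1 \<le> E0 + 2 * a * e / mf"
    by (simp add: distrib_right)
  moreover have "0 < 1 + a * mk" using mult_pos_pos[OF a \<open>0 < mk\<close>] by linarith
  ultimately have "E1 \<le> (E0 + 2 * a * e / mf) / (1 + a * mk)"
    by (simp add: pos_le_divide_eq mult.commute)
  also have "\<dots> = 1 / (1 + a * mk) * E0 + 2 * a / ((1 + a * mk) * mf) * e"
    by (simp add: add_divide_distrib)
  finally show ?thesis unfolding mk_def .
qed

locale saddle_point_problem =
  fixes f :: "real^'m \<Rightarrow> real" and gf :: "real^'m \<Rightarrow> real^'m"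
    and h :: "real^'n \<Rightarrow> real" and gh :: "real^'n \<Rightarrow> real^'n"
    and B :: "real^'m^'n"
    and TU IV :: "real^'m^'m" and TP IQ :: "real^'n^'n"
    and us :: "real^'m" and ps :: "real^'n"
    and ghB :: "real^'n \<Rightarrow> real^'n"
  assumes f_grad: "\<And>x. (f has_derivative (\<lambda>v. gf x \<bullet> v)) (at x)"
    and h_grad: "\<And>x. (h has_derivative (\<lambda>v. gh x \<bullet> v)) (at x)"
    and ghB_grad: "\<And>q. (hB h B TU has_derivative (\<lambda>v. ghB q \<bullet> v)) (at q)"
    and saddle_u: "gf us + transpose B *v ps = 0"
    and saddle_p: "B *v us = gh ps"
    and spd_TU: "spd TU" and spd_IV: "spd IV" and spd_TP: "spd TP" and spd_IQ: "spd IQ"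
begin

definition KU :: "real^'m^'m" where "KU = transpose B ** matrix_inv TP ** B"

definition KP :: "real^'n^'n" where "KP = B ** matrix_inv TU ** transpose B"

definition gfB :: "real^'m \<Rightarrow> real^'m" where "gfB u = gf u + KU *v u"

lemma KU_mv: "KU *v x = transpose B *v (matrix_inv TP *v (B *v x))"
  unfolding KU_def by (simp add: matrix_vector_mul_assoc matrix_mul_assoc)

lemma KP_mv: "KP *v y = B *v (matrix_inv TU *v (transpose B *v y))"
  unfolding KP_def by (simp add: matrix_vector_mul_assoc matrix_mul_assoc)

lemma KU_symmetric: "transpose KU = KU"
  unfolding KU_def using matrix_inv_symmetric[OF spd_invertible spd_symmetric, OF spd_TP spd_TP]
  by (simp add: matrix_transpose_mul matrix_mul_assoc)

lemma KP_symmetric: "transpose KP = KP"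
  unfolding KP_def using matrix_inv_symmetric[OF spd_invertible spd_symmetric, OF spd_TU spd_TU]
  by (simp add: matrix_transpose_mul matrix_mul_assoc)

lemma KU_quadratic: "(KU *v x) \<bullet> x = (mnorm (matrix_inv TP) (B *v x))^2"
  by (simp add: KU_mv mnorm_power2[OF spd_matrix_inv[OF spd_TP]] inner_matrix_vector_transpose
      inner_commute)

lemma KP_quadratic: "(KP *v y) \<bullet> y = (mnorm (matrix_inv TU) (transpose B *v y))^2"
  by (simp add: KP_mv mnorm_power2[OF spd_matrix_inv[OF spd_TU]] inner_matrix_vector_transpose
      inner_commute)

lemma fB_has_derivative: "(fB f B TP has_derivative (\<lambda>v. gfB u \<bullet> v)) (at u)"
proof -
  have "fB f B TP = (\<lambda>u. f u + 1/2 * (u \<bullet> (KU *v u)))"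
    by (simp add: fun_eq_iff fB_def KU_def inner_commute)
  moreover have "((\<lambda>u. f u + 1/2 * (u \<bullet> (KU *v u))) has_derivative
      (\<lambda>v. gf u \<bullet> v + 1/2 * ((2 *\<^sub>R (KU *v u)) \<bullet> v))) (at u)"
    by (intro has_derivative_add f_grad has_derivative_mult_right
        has_derivative_quadratic_form KU_symmetric)
  ultimately show ?thesis by (simp add: gfB_def inner_add_left)
qed

lemma ghB_eq: "ghB q = gh q + KP *v q"
proof (rule has_derivative_inner_unique[OF ghB_grad])
  have "hB h B TU = (\<lambda>q. h q + 1/2 * (q \<bullet> (KP *v q)))"
    by (simp add: fun_eq_iff hB_def KP_def inner_commute)
  moreover have "((\<lambda>q. h q + 1/2 * (q \<bullet> (KP *v q))) has_derivative
      (\<lambda>v. gh q \<bullet> v + 1/2 * ((2 *\<^sub>R (KP *v q)) \<bullet> v))) (at q)"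
    by (intro has_derivative_add h_grad has_derivative_mult_right
        has_derivative_quadratic_form KP_symmetric)
  ultimately show "(hB h B TU has_derivative (\<lambda>v. (gh q + KP *v q) \<bullet> v)) (at q)"
    by (simp add: inner_add_left)
qed

lemma fBtilde_gradient_eq:
  assumes "(fBtilde f gh B TP IV a uk p1 has_derivative (\<lambda>v. g \<bullet> v)) (at u1)" and "a \<noteq> 0"
  shows "g = gfB u1 + (1 / a) *\<^sub>R (IV *v (u1 - uk))
             + transpose B *v (p1 - matrix_inv TP *v gh p1)"
proof (rule has_derivative_inner_unique[OF assms(1)])
  define r where "r = transpose B *v (p1 - matrix_inv TP *v gh p1)"
  define c where "c = a *\<^sub>R (matrix_inv IV *v r)"
  have fBtilde_eq: "fBtilde f gh B TP IV a uk p1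
      = (\<lambda>u. fB f B TP u + 1 / (2 * a) * ((u + (c - uk)) \<bullet> (IV *v (u + (c - uk)))))"
    unfolding fBtilde_def mnorm_power2[OF spd_IV] c_def r_def by (simp add: fun_eq_iff algebra_simps)
  have "((\<lambda>u. u + (c - uk)) has_derivative (\<lambda>v. v)) (at u1)"
    by (auto intro!: derivative_eq_intros)
  from has_derivative_compose[OF this has_derivative_quadratic_form[OF spd_symmetric[OF spd_IV]]]
  have "((\<lambda>u. (u + (c - uk)) \<bullet> (IV *v (u + (c - uk)))) has_derivative
      (\<lambda>v. (2 *\<^sub>R (IV *v (u1 + (c - uk)))) \<bullet> v)) (at u1)" .
  then have "((\<lambda>u. fB f B TP u + 1 / (2 * a) * ((u + (c - uk)) \<bullet> (IV *v (u + (c - uk)))))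
      has_derivative (\<lambda>v. gfB u1 \<bullet> v + 1 / (2 * a) * ((2 *\<^sub>R (IV *v (u1 + (c - uk)))) \<bullet> v)))
      (at u1)"
    by (intro has_derivative_add fB_has_derivative has_derivative_mult_right)
  moreover have "IV *v (u1 + (c - uk)) = IV *v (u1 - uk) + a *\<^sub>R r"
    unfolding c_def using spd_invertible[OF spd_IV]
    by (simp add: matrix_inv_right algebra_simps)
  then have "(\<lambda>v. gfB u1 \<bullet> v + 1 / (2 * a) * ((2 *\<^sub>R (IV *v (u1 + (c - uk)))) \<bullet> v))
      = (\<lambda>v. (gfB u1 + (1 / a) *\<^sub>R (IV *v (u1 - uk)) + r) \<bullet> v)"
    using \<open>a \<noteq> 0\<close> by (simp add: fun_eq_iff inner_add_left field_simps)
  ultimately show "(fBtilde f gh B TP IV a uk p1 has_derivative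
      (\<lambda>v. (gfB u1 + (1 / a) *\<^sub>R (IV *v (u1 - uk)) + r) \<bullet> v)) (at u1)"
    unfolding fBtilde_eq by (rule has_derivative_eq_rhs)
qed

lemma gf_saddle: "gf us = - (transpose B *v ps)"
  using saddle_u by (simp add: eq_neg_iff_add_eq_0)

lemma gfB_saddle: "gfB us = transpose B *v (matrix_inv TP *v gh ps - ps)"
  by (simp add: gfB_def KU_mv gf_saddle saddle_p matrix_vector_mult_diff_distrib)

lemma ghB_saddle: "ghB ps = B *v eU gf TU us"
proof -
  have "eU gf TU us = us + matrix_inv TU *v (transpose B *v ps)"
    by (simp add: eU_def gf_saddle matrix_vector_mult_uminus)
  then show ?thesis by (simp add: ghB_eq KP_mv saddle_p matrix_vector_right_distrib)
qed

lemma primal_update_identity: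
  assumes "(fBtilde f gh B TP IV a uk p1 has_derivative (\<lambda>v. g \<bullet> v)) (at u1)" and "a \<noteq> 0"
  shows "IV *v (u1 - uk) = a *\<^sub>R (g - (gfB u1 - gfB us)
           - transpose B *v ((p1 - ps) - matrix_inv TP *v (gh p1 - gh ps)))"
proof -
  have "(1 / a) *\<^sub>R (IV *v (u1 - uk)) = g - gfB u1 - transpose B *v (p1 - matrix_inv TP *v gh p1)"
    by (simp add: fBtilde_gradient_eq[OF assms])
  also have "\<dots> = g - (gfB u1 - gfB us) - transpose B *v ((p1 - ps) - matrix_inv TP *v (gh p1 - gh ps))"
    by (simp add: gfB_saddle algebra_simps)
  finally have "a *\<^sub>R ((1 / a) *\<^sub>R (IV *v (u1 - uk))) = a *\<^sub>R (g - (gfB u1 - gfB us)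
           - transpose B *v ((p1 - ps) - matrix_inv TP *v (gh p1 - gh ps)))"
    by simp
  then show ?thesis using \<open>a \<noteq> 0\<close> by simp
qed

lemma dual_update_identity:
  assumes half: "uh = uk - matrix_inv TU *v (gf uk + transpose B *v pk)"
    and step: "p1 = pk - a *\<^sub>R (matrix_inv IQ *v (gh pk - B *v uh))"
  shows "IQ *v (p1 - pk) = - a *\<^sub>R ((ghB pk - ghB ps) - B *v (eU gf TU uk - eU gf TU us))"
proof -
  have "IQ *v (p1 - pk) = - a *\<^sub>R (gh pk - B *v uh)"
    using spd_invertible[OF spd_IQ]
    by (simp add: step matrix_vector_mult_uminus matrix_vector_mult_scaleR matrix_inv_right)
  moreover have "uh = eU gf TU uk - matrix_inv TU *v (transpose B *v pk)"
    by (simp add: half eU_def algebra_simps)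
  then have "gh pk - B *v uh = (ghB pk - ghB ps) - B *v (eU gf TU uk - eU gf TU us)"
    by (simp add: ghB_eq[of pk] ghB_saddle KP_mv matrix_vector_mult_diff_distrib)
  ultimately show ?thesis by simp
qed

lemma energy_step_identity:
  assumes half: "uh = uk - matrix_inv TU *v (gf uk + transpose B *v pk)"
    and p_step: "p1 = pk - a *\<^sub>R (matrix_inv IQ *v (gh pk - B *v uh))"
    and u_step: "(fBtilde f gh B TP IV a uk p1 has_derivative (\<lambda>v. g \<bullet> v)) (at u1)"
    and "a \<noteq> 0"
  shows "2 * (energy IV IQ us ps u1 p1 - energy IV IQ us ps uk pk)
     = 2 * a * (g \<bullet> (u1 - us) - (gfB u1 - gfB us) \<bullet> (u1 - us) - (ghB p1 - ghB ps) \<bullet> (p1 - ps)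
         + (B *v (u1 - us)) \<bullet> (matrix_inv TP *v (gh p1 - gh ps))
         - (transpose B *v (p1 - ps)) \<bullet> (matrix_inv TU *v (gf u1 - gf us))
         + (ghB p1 - ghB pk) \<bullet> (p1 - ps)
         - (eU gf TU u1 - eU gf TU uk) \<bullet> (transpose B *v (p1 - ps)))
       - ((mnorm IV (u1 - uk))^2 + (mnorm IQ (p1 - pk))^2)"
proof -
  have BT: "(transpose B *v y) \<bullet> x = y \<bullet> (B *v x)" for x y
    using inner_matrix_vector_transpose[of "transpose B" y x] by simp
  have primal: "(IV *v (u1 - uk)) \<bullet> (u1 - us) = a * (g \<bullet> (u1 - us) - (gfB u1 - gfB us) \<bullet> (u1 - us)
      - (p1 - ps) \<bullet> (B *v (u1 - us)) + (matrix_inv TP *v (gh p1 - gh ps)) \<bullet> (B *v (u1 - us)))"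
    unfolding primal_update_identity[OF u_step \<open>a \<noteq> 0\<close>]
    by (simp add: BT algebra_simps)
  have regroup: "ghB pk - ghB ps - B *v (eU gf TU uk - eU gf TU us)
      = (ghB p1 - ghB ps) - (ghB p1 - ghB pk) - B *v ((u1 - us) - matrix_inv TU *v (gf u1 - gf us))
        + B *v (eU gf TU u1 - eU gf TU uk)"
    by (simp add: eU_def algebra_simps)
  have dual: "(IQ *v (p1 - pk)) \<bullet> (p1 - ps) = - a * ((ghB p1 - ghB ps) \<bullet> (p1 - ps)
      - (ghB p1 - ghB pk) \<bullet> (p1 - ps) - (u1 - us) \<bullet> (transpose B *v (p1 - ps))
      + (matrix_inv TU *v (gf u1 - gf us)) \<bullet> (transpose B *v (p1 - ps))
      + (eU gf TU u1 - eU gf TU uk) \<bullet> (transpose B *v (p1 - ps)))"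
    unfolding dual_update_identity[OF half p_step] regroup
    by (simp only: inner_scaleR_left inner_diff_left inner_add_left inner_matrix_vector_transpose)
      (simp add: algebra_simps)
  have energy: "2 * (energy IV IQ us ps u1 p1 - energy IV IQ us ps uk pk)
      = 2 * ((IV *v (u1 - uk)) \<bullet> (u1 - us)) - (mnorm IV (u1 - uk))^2
        + 2 * ((IQ *v (p1 - pk)) \<bullet> (p1 - ps)) - (mnorm IQ (p1 - pk))^2"
    using quadratic_form_diff[OF spd_symmetric[OF spd_IV], of "u1 - us" "uk - us"]
      quadratic_form_diff[OF spd_symmetric[OF spd_IQ], of "p1 - ps" "pk - ps"]
    unfolding energy_def mnorm_power2[OF spd_IV] mnorm_power2[OF spd_IQ]
      inner_matrix_vector_symmetric[OF spd_symmetric[OF spd_IV]]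
      inner_matrix_vector_symmetric[OF spd_symmetric[OF spd_IQ]]
    by simp
  \<comment> \<open>The coupling terms of the two updates cancel.\<close>
  have cross: "(u1 - us) \<bullet> (transpose B *v (p1 - ps)) = (p1 - ps) \<bullet> (B *v (u1 - us))"
    by (metis BT inner_commute)
  show ?thesis
    unfolding energy primal dual cross inner_commute[of "matrix_inv TP *v (gh p1 - gh ps)"]
      inner_commute[of "matrix_inv TU *v (gf u1 - gf us)"]
    by (simp add: algebra_simps)
qed

lemma coupling_bound:
  assumes f_cvx: "convex_on UNIV f" and f_S11: "S11 f gf TU mu_f L_f" and L_f: "L_f \<le> 1"
    and h_cvx: "convex_on UNIV h" and h_S11: "S11 h gh TP mu_h L_h" and L_h: "L_h \<le> 1"
  shows "(B *v (u - us)) \<bullet> (matrix_inv TP *v (gh p - gh ps))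
           - (transpose B *v (p - ps)) \<bullet> (matrix_inv TU *v (gf u - gf us))
         \<le> ((gfB u - gfB us) \<bullet> (u - us) + (ghB p - ghB ps) \<bullet> (p - ps)) / 2"
proof -
  define nBu where "nBu = mnorm (matrix_inv TP) (B *v (u - us))"
  define nDh where "nDh = mnorm (matrix_inv TP) (gh p - gh ps)"
  define nBp where "nBp = mnorm (matrix_inv TU) (transpose B *v (p - ps))"
  define nDf where "nDf = mnorm (matrix_inv TU) (gf u - gf us)"
  have "(B *v (u - us)) \<bullet> (matrix_inv TP *v (gh p - gh ps)) \<le> nBu * nDh"
    unfolding nBu_def nDh_def using spd_Cauchy_Schwarz[OF spd_matrix_inv[OF spd_TP]] abs_le_D1 by blast
  moreover have "- ((transpose B *v (p - ps)) \<bullet> (matrix_inv TU *v (gf u - gf us))) \<le> nBp * nDf"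
    unfolding nBp_def nDf_def using spd_Cauchy_Schwarz[OF spd_matrix_inv[OF spd_TU]] abs_le_D2 by blast
  moreover have "nDh^2 \<le> (gh p - gh ps) \<bullet> (p - ps)"
    unfolding nDh_def by (rule S11_gradient_cocoercive[OF spd_TP h_cvx h_grad h_S11 L_h])
  moreover have "nDf^2 \<le> (gf u - gf us) \<bullet> (u - us)"
    unfolding nDf_def by (rule S11_gradient_cocoercive[OF spd_TU f_cvx f_grad f_S11 L_f])
  moreover have "(gfB u - gfB us) \<bullet> (u - us) = (gf u - gf us) \<bullet> (u - us) + nBu^2"
    by (simp add: nBu_def gfB_def flip: KU_quadratic) (simp add: algebra_simps)
  moreover have "(ghB p - ghB ps) \<bullet> (p - ps) = (gh p - gh ps) \<bullet> (p - ps) + nBp^2"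
    by (simp add: nBp_def ghB_eq flip: KP_quadratic) (simp add: algebra_simps)
  ultimately show ?thesis
    using mult_le_weighted_sum_squares[OF zero_less_one, of nBu nDh]
      mult_le_weighted_sum_squares[OF zero_less_one, of nBp nDf]
    by argo
qed

definition LS2 :: real where
  "LS2 = lambda_max (matrix_inv IQ ** B ** matrix_inv IV ** transpose B)"

lemma LS2_nonneg_and_bound:
  shows "0 \<le> LS2" and "(mnorm (matrix_inv IV) (transpose B *v y))^2 \<le> LS2 * (mnorm IQ y)^2"
proof -
  define K where "K = B ** matrix_inv IV ** transpose B"
  have K_quadratic: "x \<bullet> (K *v x) = (mnorm (matrix_inv IV) (transpose B *v x))^2" for x
    by (simp add: K_def matrix_vector_mul_assoc[symmetric] matrix_mul_assoc inner_commute
        mnorm_power2[OF spd_matrix_inv[OF spd_IV]] inner_matrix_vector_transpose)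
  have "transpose K = K"
    unfolding K_def using matrix_inv_symmetric[OF spd_invertible spd_symmetric, OF spd_IV spd_IV]
    by (simp add: matrix_transpose_mul matrix_mul_assoc)
  moreover have "LS2 = lambda_max (matrix_inv IQ ** K)"
    by (simp add: LS2_def K_def matrix_mul_assoc)
  ultimately obtain q where "q \<noteq> 0" and q: "q \<bullet> (K *v q) = LS2 * (q \<bullet> (IQ *v q))"
    and bound: "\<And>x. x \<bullet> (K *v x) \<le> LS2 * (x \<bullet> (IQ *v x))"
    using lambda_max_Rayleigh[OF _ spd_IQ] by metis
  have "0 < q \<bullet> (IQ *v q)" using spd_IQ \<open>q \<noteq> 0\<close> unfolding spd_def by blast
  moreover have "0 \<le> q \<bullet> (K *v q)" by (simp add: K_quadratic)
  ultimately show "0 \<le> LS2" using q by (simp add: zero_le_mult_iff)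
  show "(mnorm (matrix_inv IV) (transpose B *v y))^2 \<le> LS2 * (mnorm IQ y)^2"
    using bound[of y] by (simp add: K_quadratic mnorm_power2[OF spd_IQ])
qed

lemma Lipschitz_terms_bound:
  assumes L_hB: "\<And>q r. mnorm (matrix_inv IQ) (ghB q - ghB r) \<le> L_hB * mnorm IQ (q - r)"
    and L_eU: "\<And>v w. mnorm IV (eU gf TU v - eU gf TU w) \<le> L_eU * mnorm IV (v - w)"
    and a: "0 < a"
  shows "(ghB p - ghB p') \<bullet> (p - ps) - (eU gf TU u - eU gf TU u') \<bullet> (transpose B *v (p - ps))
         \<le> a / 2 * (L_hB^2 + L_eU^2 * LS2) * (mnorm IQ (p - ps))^2
           + ((mnorm IV (u - u'))^2 + (mnorm IQ (p - p'))^2) / (2 * a)"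
proof -
  define Y where "Y = mnorm IQ (p - ps)"
  define du where "du = mnorm IV (u - u')"
  define dp where "dp = mnorm IQ (p - p')"
  have "0 \<le> Y" unfolding Y_def by (rule mnorm_nonneg[OF spd_IQ])
  have "(ghB p - ghB p') \<bullet> (p - ps) \<le> mnorm (matrix_inv IQ) (ghB p - ghB p') * Y"
    unfolding Y_def using spd_dual_Cauchy_Schwarz[OF spd_IQ] abs_le_D1 by blast
  also have "\<dots> \<le> (L_hB * Y) * dp"
    using mult_right_mono[OF L_hB \<open>0 \<le> Y\<close>] by (simp add: dp_def mult_ac)
  also have "\<dots> \<le> a / 2 * (L_hB * Y)^2 + dp^2 / (2 * a)"
    by (rule mult_le_weighted_sum_squares[OF a])
  finally have h_term: "(ghB p - ghB p') \<bullet> (p - ps) \<le> a / 2 * L_hB^2 * Y^2 + dp^2 / (2 * a)"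
    by (simp add: power_mult_distrib)
  have "- ((eU gf TU u - eU gf TU u') \<bullet> (transpose B *v (p - ps)))
      \<le> mnorm IV (eU gf TU u - eU gf TU u') * mnorm (matrix_inv IV) (transpose B *v (p - ps))"
    using spd_dual_Cauchy_Schwarz[OF spd_IV, of "transpose B *v (p - ps)" "eU gf TU u - eU gf TU u'"]
    by (metis abs_le_D2 inner_commute mult.commute)
  also have "\<dots> \<le> (L_eU * du) * (sqrt LS2 * Y)"
  proof (rule mult_mono)
    show "mnorm IV (eU gf TU u - eU gf TU u') \<le> L_eU * du" unfolding du_def by (rule L_eU)
    show "mnorm (matrix_inv IV) (transpose B *v (p - ps)) \<le> sqrt LS2 * Y"
      using LS2_nonneg_and_bound(2)[of "p - ps"] \<open>0 \<le> Y\<close> LS2_nonneg_and_bound(1)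
      by (metis Y_def real_le_rsqrt real_sqrt_mult real_sqrt_abs abs_of_nonneg)
  qed (auto simp: du_def intro: order_trans[OF mnorm_nonneg[OF spd_IV] L_eU]
      mnorm_nonneg spd_matrix_inv spd_IV)
  also have "\<dots> = (L_eU * sqrt LS2 * Y) * du" by (simp add: mult_ac)
  also have "\<dots> \<le> a / 2 * (L_eU * sqrt LS2 * Y)^2 + du^2 / (2 * a)"
    by (rule mult_le_weighted_sum_squares[OF a])
  finally have e_term: "- ((eU gf TU u - eU gf TU u') \<bullet> (transpose B *v (p - ps)))
      \<le> a / 2 * (L_eU^2 * LS2) * Y^2 + du^2 / (2 * a)"
    using LS2_nonneg_and_bound(1) by (simp add: power_mult_distrib)
  have "dp^2 / (2 * a) + du^2 / (2 * a) = (du^2 + dp^2) / (2 * a)" by (simp add: add_divide_distrib)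
  with h_term e_term show ?thesis
    unfolding Y_def[symmetric] du_def[symmetric] dp_def[symmetric] by (simp add: algebra_simps)
qed

lemma LSQ2_pos:
  assumes hB_sc: "strongly_convex_wrt IQ mu_hB (hB h B TU)" and mu_hB: "0 < mu_hB"
    and L_hB: "\<And>q r. mnorm (matrix_inv IQ) (ghB q - ghB r) \<le> L_hB * mnorm IQ (q - r)"
  shows "0 < L_hB^2 + L_eU^2 * LS2"
proof -
  have "mu_hB \<le> L_hB"
    by (rule strongly_convex_modulus_le_Lipschitz[OF spd_IQ hB_sc ghB_grad L_hB])
  then show ?thesis using mu_hB LS2_nonneg_and_bound(1) by (simp add: add_pos_nonneg)
qed

lemma one_step_contraction:
  assumes f_cvx: "convex_on UNIV f" and f_S11: "S11 f gf TU mu_f L_f" and L_f: "L_f \<le> 1"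
    and h_cvx: "convex_on UNIV h" and h_S11: "S11 h gh TP mu_h L_h" and L_h: "L_h \<le> 1"
    and fB_sc: "strongly_convex_wrt IV mu_fB (fB f B TP)" and mu_fB: "0 < mu_fB"
    and hB_sc: "strongly_convex_wrt IQ mu_hB (hB h B TU)"
    and L_hB: "\<And>q r. mnorm (matrix_inv IQ) (ghB q - ghB r) \<le> L_hB * mnorm IQ (q - r)"
    and L_eU: "\<And>v w. mnorm IV (eU gf TU v - eU gf TU w) \<le> L_eU * mnorm IV (v - w)"
    and half: "uh = uk - matrix_inv TU *v (gf uk + transpose B *v pk)"
    and p_step: "p1 = pk - a *\<^sub>R (matrix_inv IQ *v (gh pk - B *v uh))"
    and u_step: "\<exists>g. (fBtilde f gh B TP IV a uk p1 has_derivative (\<lambda>v. g \<bullet> v)) (at u1)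
                   \<and> (mnorm (matrix_inv IV) g)^2 \<le> e"
    and a: "0 < a" and a_lt: "a < mu_hB / LSQ2"
    and LSQ2: "LSQ2 = L_hB^2 + L_eU^2 * LS2"
  shows "energy IV IQ us ps u1 p1
           \<le> 1 / (1 + a * min (mu_fB / 2) (mu_hB - a * LSQ2)) * energy IV IQ us ps uk pk
             + 2 * a / ((1 + a * min (mu_fB / 2) (mu_hB - a * LSQ2)) * mu_fB) * e"
proof -
  obtain g where g: "(fBtilde f gh B TP IV a uk p1 has_derivative (\<lambda>v. g \<bullet> v)) (at u1)"
    and g_eps: "(mnorm (matrix_inv IV) g)^2 \<le> e"
    using u_step by blast
  define X where "X = mnorm IV (u1 - us)"
  define Y where "Y = mnorm IQ (p1 - ps)"
  define D where "D = (mnorm IV (u1 - uk))^2 + (mnorm IQ (p1 - pk))^2"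
  have "0 \<le> LSQ2" using LS2_nonneg_and_bound(1) by (simp add: LSQ2)
  then have "a * LSQ2 < mu_hB"
    using a a_lt by (cases "LSQ2 = 0") (simp_all add: pos_less_divide_eq mult.commute)
  have "a \<noteq> 0" using a by simp
  have "g \<bullet> (u1 - us) \<le> e / (2 * (mu_fB / 4)) + mu_fB / 4 / 2 * X^2"
    unfolding X_def using mu_fB by (intro inner_le_Young_dual_norm spd_IV g_eps) simp
  then have grad: "g \<bullet> (u1 - us) \<le> 2 * e / mu_fB + mu_fB / 8 * X^2" by simp
  have sc_f: "mu_fB * X^2 \<le> (gfB u1 - gfB us) \<bullet> (u1 - us)"
    using strongly_convex_gradient_monotone[OF spd_IV fB_sc fB_has_derivative] by (simp add: X_def)
  have sc_h: "mu_hB * Y^2 \<le> (ghB p1 - ghB ps) \<bullet> (p1 - ps)"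
    using strongly_convex_gradient_monotone[OF spd_IQ hB_sc ghB_grad] by (simp add: Y_def)
  note coupling = coupling_bound[OF f_cvx f_S11 L_f h_cvx h_S11 L_h, of u1 p1]
  note Lipschitz = Lipschitz_terms_bound[OF L_hB L_eU a, of p1 pk u1 uk, folded LSQ2]
  \<comment> \<open>\<Phi> is the bracket of energy_step_identity.\<close>
  have "\<exists>\<Phi>. 2 * (energy IV IQ us ps u1 p1 - energy IV IQ us ps uk pk) = 2 * a * \<Phi> - D
      \<and> \<Phi> \<le> 2 * e / mu_fB + mu_fB / 8 * X^2 - mu_fB * X^2 / 2 - mu_hB * Y^2 / 2
             + a / 2 * LSQ2 * Y^2 + D / (2 * a)"
    using grad sc_f sc_h coupling Lipschitz unfolding D_def X_def Y_def
    by - (rule exI, rule conjI, rule energy_step_identity[OF half p_step g \<open>a \<noteq> 0\<close>], argo)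
  then obtain \<Phi> where identity: "2 * (energy IV IQ us ps u1 p1 - energy IV IQ us ps uk pk) = 2 * a * \<Phi> - D"
    and gap: "\<Phi> \<le> 2 * e / mu_fB + mu_fB / 8 * X^2 - mu_fB * X^2 / 2 - mu_hB * Y^2 / 2
             + a / 2 * LSQ2 * Y^2 + D / (2 * a)"
    by blast
  have "energy IV IQ us ps u1 p1 = (X^2 + Y^2) / 2"
    by (simp add: energy_def X_def Y_def)
  from energy_contraction_arith[OF a mu_fB \<open>a * LSQ2 < mu_hB\<close> identity this gap]
  show ?thesis .
qed

end

section \<open>Linear convergence\<close>

lemma geometric_recursion_bound:
  fixes E e :: "nat \<Rightarrow> real"
  assumes r: "0 \<le> r" and step: "\<And>k. E (Suc k) \<le> r * E k + r * c * e k"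
  shows "E (Suc N) \<le> r ^ Suc N * E 0 + c * (\<Sum>k\<le>N. r ^ (N - k + 1) * e k)"
proof (induction N)
  case 0
  then show ?case using step[of 0] by (simp add: mult.commute mult.left_commute)
next
  case (Suc N)
  have "r * (\<Sum>k\<le>N. r ^ (N - k + 1) * e k) = (\<Sum>k\<le>N. r ^ (Suc N - k + 1) * e k)"
    unfolding sum_distrib_left by (rule sum.cong) (auto simp: Suc_diff_le)
  then have "r * (r ^ Suc N * E 0 + c * (\<Sum>k\<le>N. r ^ (N - k + 1) * e k)) + r * c * e (Suc N)
      = r ^ Suc (Suc N) * E 0 + c * (\<Sum>k\<le>Suc N. r ^ (Suc N - k + 1) * e k)"
    by (simp add: algebra_simps)
  moreover have "E (Suc (Suc N)) \<le> r * (r ^ Suc N * E 0 + c * (\<Sum>k\<le>N. r ^ (N - k + 1) * e k))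
      + r * c * e (Suc N)"
    using step[of "Suc N"] Suc.IH r by (meson add_right_mono mult_left_mono order_trans)
  ultimately show ?case by simp
qed

lemma linear_convergence_half_maximal_step:
  fixes E e alpha :: "nat \<Rightarrow> real" and mf mh L :: real
  assumes mf: "0 < mf" and mh: "0 < mh" and L: "0 < L"
    and step: "\<And>k. 0 < alpha k \<Longrightarrow> alpha k < mh / L \<Longrightarrow>
      E (Suc k) \<le> 1 / (1 + alpha k * min (mf / 2) (mh - alpha k * L)) * E k
        + 2 * alpha k / ((1 + alpha k * min (mf / 2) (mh - alpha k * L)) * mf) * e k"
    and alpha: "\<And>k. alpha k = mh / (2 * L)"
  defines "rho \<equiv> 1 / (1 + mh * min mf mh / (4 * L))"
  shows "0 < rho" and "rho < 1"
    and "E (Suc N) \<le> rho ^ Suc N * E 0 + mh / (mf * L) * (\<Sum>k\<le>N. rho ^ (N - k + 1) * e k)"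
proof -
  have t: "0 < mh * min mf mh / (4 * L)" using mf mh L by simp
  then show "0 < rho" and "rho < 1" by (simp_all add: rho_def)
  define a0 where "a0 = mh / (2 * L)"
  have "a0 * min (mf / 2) (mh - a0 * L) = mh * min mf mh / (4 * L)"
    using L by (simp add: a0_def min_def)
  then have c1: "1 / (1 + a0 * min (mf / 2) (mh - a0 * L)) = rho"
    and c2: "2 * a0 / ((1 + a0 * min (mf / 2) (mh - a0 * L)) * mf) = rho * (mh / (mf * L))"
    by (simp_all add: rho_def a0_def)
  have "0 < a0" and "a0 < mh / L"
    using mh L by (simp_all add: a0_def field_simps)
  from step[unfolded alpha a0_def[symmetric], OF this]
  have "E (Suc k) \<le> rho * E k + rho * (mh / (mf * L)) * e k" for k
    unfolding c1 c2 .
  then show "E (Suc N) \<le> rho ^ Suc N * E 0 + mh / (mf * L) * (\<Sum>k\<le>N. rho ^ (N - k + 1) * e k)"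
    using t by (intro geometric_recursion_bound) (simp_all add: rho_def)
qed

theorem corollary5p7:
  fixes f :: "real^'m \<Rightarrow> real" and gf :: "real^'m \<Rightarrow> real^'m"
    and h :: "real^'n \<Rightarrow> real" and gh :: "real^'n \<Rightarrow> real^'n"
    and B :: "real^'m^'n"
    and TU IV :: "real^'m^'m" and TP IQ :: "real^'n^'n"
    and us :: "real^'m" and ps :: "real^'n"
    and ghB :: "real^'n \<Rightarrow> real^'n"
    and u uhalf :: "nat \<Rightarrow> real^'m" and p :: "nat \<Rightarrow> real^'n"
    and alpha eps :: "nat \<Rightarrow> real"
    and mu_hTP L_hTP mu_fTU L_fTU mu_fB mu_hB L_hB L_eU :: real
  assumes mn: "CARD('n) \<le> CARD('m)"
    and Brank: "rank B = CARD('n)"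
    and f_cvx: "convex_on UNIV f" and h_cvx: "convex_on UNIV h"
    and f_grad: "\<And>x. (f has_derivative (\<lambda>v. gf x \<bullet> v)) (at x)"
    and h_grad: "\<And>x. (h has_derivative (\<lambda>v. gh x \<bullet> v)) (at x)"
    and gf_cont: "continuous_on UNIV gf" and gh_cont: "continuous_on UNIV gh"
    and gf_lip: "\<exists>L. L-lipschitz_on UNIV gf" and gh_lip: "\<exists>L. L-lipschitz_on UNIV gh"
    and saddle1: "gf us + transpose B *v ps = 0"
    and saddle2: "B *v us = gh ps"
    and spd: "spd TU" "spd IV" "spd TP" "spd IQ"
    and h_S11: "S11 h gh TP mu_hTP L_hTP" and L_hTP: "L_hTP \<le> 1"
    and f_S11: "S11 f gf TU mu_fTU L_fTU" and L_fTU: "L_fTU \<le> 1"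
    and fB_sc: "strongly_convex_wrt IV mu_fB (fB f B TP)" and mu_fB: "mu_fB > 0"
    and hB_sc: "strongly_convex_wrt IQ mu_hB (hB h B TU)" and mu_hB: "mu_hB > 0"
    and ghB: "\<And>q. (hB h B TU has_derivative (\<lambda>v. ghB q \<bullet> v)) (at q)"
    and L_hB: "\<And>q r. mnorm (matrix_inv IQ) (ghB q - ghB r) \<le> L_hB * mnorm IQ (q - r)"
    and L_eU: "\<And>v w. mnorm IV (eU gf TU v - eU gf TU w) \<le> L_eU * mnorm IV (v - w)"
    and it_half: "\<And>k. uhalf k = u k - matrix_inv TU *v (gf (u k) + transpose B *v p k)"
    and it_p: "\<And>k. p (Suc k) = p k - alpha k *\<^sub>R (matrix_inv IQ *v (gh (p k) - B *v uhalf k))"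
    and it_u: "\<And>k. \<exists>g. (fBtilde f gh B TP IV (alpha k) (u k) (p (Suc k)) has_derivative (\<lambda>v. g \<bullet> v))
                        (at (u (Suc k))) \<and> (mnorm (matrix_inv IV) g)^2 \<le> eps k"
  defines "LSQ2 \<equiv> L_hB^2 + L_eU^2 * lambda_max (matrix_inv IQ ** B ** matrix_inv IV ** transpose B)"
    and "rho \<equiv> 1 / (1 + mu_hB * min mu_fB mu_hB / (4 * (L_hB^2 + L_eU^2 *
                 lambda_max (matrix_inv IQ ** B ** matrix_inv IV ** transpose B))))"
  shows "(\<forall>k. 0 < alpha k \<and> alpha k < mu_hB / LSQ2 \<longrightarrow>
            (let mu_k = min (mu_fB / 2) (mu_hB - alpha k * LSQ2) in
              energy IV IQ us ps (u (Suc k)) (p (Suc k))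
                \<le> 1 / (1 + alpha k * mu_k) * energy IV IQ us ps (u k) (p k)
                  + 2 * alpha k / ((1 + alpha k * mu_k) * mu_fB) * eps k))
       \<and> ((\<forall>k. alpha k = mu_hB / (2 * LSQ2)) \<longrightarrow>
            0 < rho \<and> rho < 1 \<and>
            (\<forall>N. energy IV IQ us ps (u (Suc N)) (p (Suc N))
                   \<le> rho ^ (Suc N) * energy IV IQ us ps (u 0) (p 0)
                     + mu_hB / (mu_fB * LSQ2) * (\<Sum>k\<le>N. rho ^ (N - k + 1) * eps k)))"
proof -
  interpret saddle_point_problem f gf h gh B TU IV TP IQ us ps ghB
    using f_grad h_grad ghB saddle1 saddle2 spd by unfold_locales
  have LSQ2_eq: "LSQ2 = L_hB^2 + L_eU^2 * LS2" by (simp add: LSQ2_def LS2_def)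
  have step: "energy IV IQ us ps (u (Suc k)) (p (Suc k))
      \<le> 1 / (1 + alpha k * min (mu_fB / 2) (mu_hB - alpha k * LSQ2)) * energy IV IQ us ps (u k) (p k)
        + 2 * alpha k / ((1 + alpha k * min (mu_fB / 2) (mu_hB - alpha k * LSQ2)) * mu_fB) * eps k"
    if "0 < alpha k" "alpha k < mu_hB / LSQ2" for k
    by (rule one_step_contraction[OF f_cvx f_S11 L_fTU h_cvx h_S11 L_hTP fB_sc mu_fB hB_sc L_hB L_eU
          it_half it_p it_u that LSQ2_eq])
  have "0 < LSQ2"
    using LSQ2_pos[OF hB_sc mu_hB L_hB] by (simp add: LSQ2_eq)
  note rate = linear_convergence_half_maximal_step[where E = "\<lambda>k. energy IV IQ us ps (u k) (p k)",
      OF mu_fB mu_hB this step]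
  have "rho = 1 / (1 + mu_hB * min mu_fB mu_hB / (4 * LSQ2))"
    by (simp add: rho_def LSQ2_def)
  then show ?thesis
    using step rate by (auto simp: Let_def)
qed

end
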